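(* Let $H$ be a finite-dimensional Hopf algebra over a field $\Bbbk$. Suppose $|G(H^* )|\neq1$, $G(H^* )\cap Z(H^* )=\{1\}$, $G(H)\cap Z(H)=\{1\}$, and there exists an odd prime $p$ dividing $|G(H^* )|$ such that $\alpha(g)\neq1$ for every $g\in G(H)$ of order $p$ and every $\alpha\in G(H^* )$ of order $p$. Then $H$ admits no universal $R$-matrix, i.e. there is no $R$ making $(H,R)$ quasitriangular.
   Context: A universal $R$-matrix for $H$ is an invertible $R\in H\otimes H$ with $(\Delta\otimes\mathrm{id})(R)=R_{13}R_{23}$, $(\mathrm{id}\otimes\Delta)(R)=R_{13}R_{12}$, $\tau\Delta(h)=R\Delta(h)R^{-1}$ for all $h$. $G(B)$ denotes the group of group-like elements of a Hopf algebra $B$ and $Z(B)$ its center; $H^*$ is the dual Hopf algebra. *)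

theory Defs
  imports "HOL-Computational_Algebra.Primes"
begin

text \<open>A finite-dimensional Hopf algebra H over a field 'k is given by structure
constants with respect to a basis indexed by the finite type 'b.  Elements of H
are coordinate vectors 'b \<Rightarrow> 'k, elements of H\<otimes>H are ('b\<times>'b) \<Rightarrow> 'k, elements of
H\<otimes>H\<otimes>H are ('b\<times>'b\<times>'b) \<Rightarrow> 'k, and elements of the dual H* are functionals given
by their values on the basis, 'b \<Rightarrow> 'k.\<close>

record ('b, 'k) hopf_sc =
  mc :: "'b \<Rightarrow> 'b \<Rightarrow> 'b \<Rightarrow> 'k"   (* e_i e_j = sum_k mc i j k e_k *)
  un :: "'b \<Rightarrow> 'k"                (* 1 = sum_k un k e_k *)
  dc :: "'b \<Rightarrow> 'b \<Rightarrow> 'b \<Rightarrow> 'k"   (* Delta e_i = sum_{j,k} dc i j k e_j (x) e_k *)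
  cu :: "'b \<Rightarrow> 'k"                (* epsilon(e_i) = cu i *)
  an :: "'b \<Rightarrow> 'b \<Rightarrow> 'k"         (* S e_i = sum_j an i j e_j *)

definition bvec :: "'b \<Rightarrow> 'b \<Rightarrow> 'k::field" where
  "bvec i = (\<lambda>j. if j = i then 1 else 0)"

definition hmul :: "('b::finite, 'k::field) hopf_sc \<Rightarrow> ('b \<Rightarrow> 'k) \<Rightarrow> ('b \<Rightarrow> 'k) \<Rightarrow> 'b \<Rightarrow> 'k" where
  "hmul H x y = (\<lambda>k. \<Sum>i\<in>UNIV. \<Sum>j\<in>UNIV. x i * y j * mc H i j k)"

definition hcomul :: "('b::finite, 'k::field) hopf_sc \<Rightarrow> ('b \<Rightarrow> 'k) \<Rightarrow> ('b \<times> 'b) \<Rightarrow> 'k" where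
  "hcomul H x = (\<lambda>(a, b). \<Sum>i\<in>UNIV. x i * dc H i a b)"

definition hcounit :: "('b::finite, 'k::field) hopf_sc \<Rightarrow> ('b \<Rightarrow> 'k) \<Rightarrow> 'k" where
  "hcounit H x = (\<Sum>i\<in>UNIV. x i * cu H i)"

definition hanti :: "('b::finite, 'k::field) hopf_sc \<Rightarrow> ('b \<Rightarrow> 'k) \<Rightarrow> 'b \<Rightarrow> 'k" where
  "hanti H x = (\<lambda>j. \<Sum>i\<in>UNIV. x i * an H i j)"

definition tmul :: "('b::finite, 'k::field) hopf_sc \<Rightarrow> ('b \<times> 'b \<Rightarrow> 'k) \<Rightarrow> ('b \<times> 'b \<Rightarrow> 'k) \<Rightarrow> 'b \<times> 'b \<Rightarrow> 'k" where
  "tmul H x y = (\<lambda>(k1, k2). \<Sum>i1\<in>UNIV. \<Sum>i2\<in>UNIV. \<Sum>j1\<in>UNIV. \<Sum>j2\<in>UNIV.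
      x (i1, i2) * y (j1, j2) * mc H i1 j1 k1 * mc H i2 j2 k2)"

definition tone :: "('b::finite, 'k::field) hopf_sc \<Rightarrow> 'b \<times> 'b \<Rightarrow> 'k" where
  "tone H = (\<lambda>(a, b). un H a * un H b)"

definition t3mul :: "('b::finite, 'k::field) hopf_sc \<Rightarrow> ('b \<times> 'b \<times> 'b \<Rightarrow> 'k) \<Rightarrow> ('b \<times> 'b \<times> 'b \<Rightarrow> 'k)
    \<Rightarrow> 'b \<times> 'b \<times> 'b \<Rightarrow> 'k" where
  "t3mul H x y = (\<lambda>(k1, k2, k3). \<Sum>i1\<in>UNIV. \<Sum>i2\<in>UNIV. \<Sum>i3\<in>UNIV. \<Sum>j1\<in>UNIV. \<Sum>j2\<in>UNIV. \<Sum>j3\<in>UNIV.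
      x (i1, i2, i3) * y (j1, j2, j3) * mc H i1 j1 k1 * mc H i2 j2 k2 * mc H i3 j3 k3)"

definition flip :: "('b \<times> 'b \<Rightarrow> 'k) \<Rightarrow> 'b \<times> 'b \<Rightarrow> 'k" where
  "flip x = (\<lambda>(a, b). x (b, a))"

definition delta_id :: "('b::finite, 'k::field) hopf_sc \<Rightarrow> ('b \<times> 'b \<Rightarrow> 'k) \<Rightarrow> 'b \<times> 'b \<times> 'b \<Rightarrow> 'k" where
  "delta_id H t = (\<lambda>(a, b, c). \<Sum>i\<in>UNIV. t (i, c) * dc H i a b)"

definition id_delta :: "('b::finite, 'k::field) hopf_sc \<Rightarrow> ('b \<times> 'b \<Rightarrow> 'k) \<Rightarrow> 'b \<times> 'b \<times> 'b \<Rightarrow> 'k" where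
  "id_delta H t = (\<lambda>(a, b, c). \<Sum>i\<in>UNIV. t (a, i) * dc H i b c)"

definition leg12 :: "('b, 'k::field) hopf_sc \<Rightarrow> ('b \<times> 'b \<Rightarrow> 'k) \<Rightarrow> 'b \<times> 'b \<times> 'b \<Rightarrow> 'k" where
  "leg12 H R = (\<lambda>(a, b, c). R (a, b) * un H c)"

definition leg13 :: "('b, 'k::field) hopf_sc \<Rightarrow> ('b \<times> 'b \<Rightarrow> 'k) \<Rightarrow> 'b \<times> 'b \<times> 'b \<Rightarrow> 'k" where
  "leg13 H R = (\<lambda>(a, b, c). R (a, c) * un H b)"

definition leg23 :: "('b, 'k::field) hopf_sc \<Rightarrow> ('b \<times> 'b \<Rightarrow> 'k) \<Rightarrow> 'b \<times> 'b \<times> 'b \<Rightarrow> 'k" where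
  "leg23 H R = (\<lambda>(a, b, c). un H a * R (b, c))"

definition is_hopf :: "('b::finite, 'k::field) hopf_sc \<Rightarrow> bool" where
  "is_hopf H \<longleftrightarrow>
     (\<forall>x y z. hmul H (hmul H x y) z = hmul H x (hmul H y z)) \<and>
     (\<forall>x. hmul H (un H) x = x \<and> hmul H x (un H) = x) \<and>
     (\<forall>x. delta_id H (hcomul H x) = id_delta H (hcomul H x)) \<and>
     (\<forall>x. (\<lambda>c. \<Sum>a\<in>UNIV. hcomul H x (a, c) * cu H a) = x \<and>
          (\<lambda>a. \<Sum>c\<in>UNIV. hcomul H x (a, c) * cu H c) = x) \<and>
     (\<forall>x y. hcomul H (hmul H x y) = tmul H (hcomul H x) (hcomul H y)) \<and>
     hcomul H (un H) = tone H \<and>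
     (\<forall>x y. hcounit H (hmul H x y) = hcounit H x * hcounit H y) \<and>
     hcounit H (un H) = 1 \<and>
     (\<forall>x. (\<lambda>k. \<Sum>a\<in>UNIV. \<Sum>b\<in>UNIV. hcomul H x (a, b) * hmul H (hanti H (bvec a)) (bvec b) k)
            = (\<lambda>k. hcounit H x * un H k)) \<and>
     (\<forall>x. (\<lambda>k. \<Sum>a\<in>UNIV. \<Sum>b\<in>UNIV. hcomul H x (a, b) * hmul H (bvec a) (hanti H (bvec b)) k)
            = (\<lambda>k. hcounit H x * un H k))"

definition grouplikes :: "('b::finite, 'k::field) hopf_sc \<Rightarrow> ('b \<Rightarrow> 'k) set" where
  "grouplikes H = {g. g \<noteq> (\<lambda>_. 0) \<and> hcomul H g = (\<lambda>(a, b). g a * g b)}"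

definition center :: "('b::finite, 'k::field) hopf_sc \<Rightarrow> ('b \<Rightarrow> 'k) set" where
  "center H = {z. \<forall>x. hmul H z x = hmul H x z}"

text \<open>The dual Hopf algebra H*: a functional f is given by its values f(e_i).
Product = convolution, unit = counit of H, coproduct = transpose of the multiplication.\<close>

definition dmul :: "('b::finite, 'k::field) hopf_sc \<Rightarrow> ('b \<Rightarrow> 'k) \<Rightarrow> ('b \<Rightarrow> 'k) \<Rightarrow> 'b \<Rightarrow> 'k" where
  "dmul H f g = (\<lambda>k. \<Sum>a\<in>UNIV. \<Sum>b\<in>UNIV. dc H k a b * f a * g b)"

definition dcomul :: "('b::finite, 'k::field) hopf_sc \<Rightarrow> ('b \<Rightarrow> 'k) \<Rightarrow> 'b \<times> 'b \<Rightarrow> 'k" where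
  "dcomul H f = (\<lambda>(a, b). \<Sum>k\<in>UNIV. mc H a b k * f k)"

definition dual_grouplikes :: "('b::finite, 'k::field) hopf_sc \<Rightarrow> ('b \<Rightarrow> 'k) set" where
  "dual_grouplikes H = {f. f \<noteq> (\<lambda>_. 0) \<and> dcomul H f = (\<lambda>(a, b). f a * f b)}"

definition dual_center :: "('b::finite, 'k::field) hopf_sc \<Rightarrow> ('b \<Rightarrow> 'k) set" where
  "dual_center H = {f. \<forall>g. dmul H f g = dmul H g f}"

definition eval :: "('b::finite \<Rightarrow> 'k::field) \<Rightarrow> ('b \<Rightarrow> 'k) \<Rightarrow> 'k" where
  "eval f x = (\<Sum>i\<in>UNIV. f i * x i)"

definition elem_ord :: "('a \<Rightarrow> 'a \<Rightarrow> 'a) \<Rightarrow> 'a \<Rightarrow> 'a \<Rightarrow> nat" where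
  "elem_ord mul e x = (LEAST n. 0 < n \<and> (mul x ^^ n) e = e)"

definition is_universal_R :: "('b::finite, 'k::field) hopf_sc \<Rightarrow> ('b \<times> 'b \<Rightarrow> 'k) \<Rightarrow> bool" where
  "is_universal_R H R \<longleftrightarrow>
     (\<exists>R'. tmul H R R' = tone H \<and> tmul H R' R = tone H \<and>
           (\<forall>h. flip (hcomul H h) = tmul H (tmul H R (hcomul H h)) R')) \<and>
     delta_id H R = t3mul H (leg13 H R) (leg23 H R) \<and>
     id_delta H R = t3mul H (leg13 H R) (leg12 H R)"

end

theory Submission
  imports Defs "HOL-Algebra.Multiplicative_Group" "HOL-Algebra.Sylow" "HOL-Library.Function_Algebras"
begin

text \<open>For a character \<alpha> of H, i.e. a grouplike element of H*, put x_\<alpha> = (\<alpha> \<otimes> id)(R) and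
y_\<alpha> = (id \<otimes> \<alpha>)(R). The axioms of R make x_\<alpha> and y_\<alpha> grouplike, make \<alpha> \<mapsto> x_\<alpha> a
homomorphism G(H*) \<rightarrow> G(H) whose kernel is central in H*, and make y_\<alpha> x_\<alpha> a central
grouplike element. By the two centre hypotheses, \<alpha> \<mapsto> x_\<alpha> is injective and y_\<alpha> = x_\<alpha>\<inverse>.
Choose \<alpha> of order p (Cauchy); then x_\<alpha> has order p as well. Since
\<alpha>(y_\<alpha>) = (\<alpha> \<otimes> \<alpha>)(R) = \<alpha>(x_\<alpha>), the scalar \<omega> = \<alpha>(x_\<alpha>) satisfies \<omega>^2 = \<alpha>(x_\<alpha> y_\<alpha>) = 1 and
\<omega>^p = 1 with p odd, so \<omega> = 1, contradicting the hypothesis on \<alpha> and x_\<alpha>.\<close>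

hide_const (open) UnivPoly.eval

text \<open>The reordering lemmas keep their index sets distinct so that their proofs by sum.swap
cannot loop; they are applied with every index set equal to UNIV.\<close>

lemma sum_move_outer_2:
  "(\<Sum>k\<in>K. \<Sum>i\<in>I. \<Sum>j\<in>J. F k i j) = (\<Sum>i\<in>I. \<Sum>j\<in>J. \<Sum>k\<in>K. F k i j)"
  by (simp only: sum.swap[where A=K and B=I] sum.swap[where A=K and B=J] sum.swap[where A=J and B=I])

lemma sum_move_inner_2:
  "(\<Sum>a\<in>A. \<Sum>b\<in>B. \<Sum>i\<in>I. F a b i) = (\<Sum>i\<in>I. \<Sum>a\<in>A. \<Sum>b\<in>B. F a b i)"
  by (simp only: sum.swap[where A=A and B=I] sum.swap[where A=B and B=A] sum.swap[where A=B and B=I])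

lemma sum_reverse_3:
  "(\<Sum>d\<in>D. \<Sum>c\<in>C. \<Sum>k\<in>K. F d c k) = (\<Sum>k\<in>K. \<Sum>c\<in>C. \<Sum>d\<in>D. F d c k)"
  by (simp only: sum.swap[where A=D and B=C] sum.swap[where A=D and B=K] sum.swap[where A=C and B=K])

lemma sum_move_outer_4:
  "(\<Sum>a\<in>A. \<Sum>i1\<in>A1. \<Sum>i2\<in>A2. \<Sum>j1\<in>B1. \<Sum>j2\<in>B2. F a i1 i2 j1 j2) =
   (\<Sum>i1\<in>A1. \<Sum>i2\<in>A2. \<Sum>j1\<in>B1. \<Sum>j2\<in>B2. \<Sum>a\<in>A. F a i1 i2 j1 j2)"
  by (simp only: sum.swap[where A=A and B=A1] sum.swap[where A=A and B=A2]
      sum.swap[where A=A and B=B1] sum.swap[where A=A and B=B2])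

lemma sum_pair_up_4:
  "(\<Sum>i1\<in>A1. \<Sum>i2\<in>A2. \<Sum>j1\<in>B1. \<Sum>j2\<in>B2. F i1 i2 j1 j2) =
   (\<Sum>i2\<in>A2. \<Sum>j2\<in>B2. \<Sum>i1\<in>A1. \<Sum>j1\<in>B1. F i1 i2 j1 j2)"
  by (simp only: sum.swap[where A=A1 and B=A2] sum.swap[where A=A1 and B=B2] sum.swap[where A=B1 and B=B2])

lemma sum_pair_up_4_swapped:
  "(\<Sum>i1\<in>A1. \<Sum>i2\<in>A2. \<Sum>j1\<in>B1. \<Sum>j2\<in>B2. F i1 i2 j1 j2) =
   (\<Sum>i2\<in>A2. \<Sum>j2\<in>B2. \<Sum>j1\<in>B1. \<Sum>i1\<in>A1. F i1 i2 j1 j2)"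
  by (simp only: sum.swap[where A=A1 and B=A2] sum.swap[where A=A1 and B=B2]
      sum.swap[where A=A1 and B=B1] sum.swap[where A=B1 and B=B2])

lemma sum_pair_up_fst_4:
  "(\<Sum>i1\<in>A1. \<Sum>i2\<in>A2. \<Sum>j1\<in>B1. \<Sum>j2\<in>B2. F i1 i2 j1 j2) =
   (\<Sum>i1\<in>A1. \<Sum>j1\<in>B1. \<Sum>j2\<in>B2. \<Sum>i2\<in>A2. F i1 i2 j1 j2)"
  by (simp only: sum.swap[where A=A2 and B=B1] sum.swap[where A=A2 and B=B2])

lemma sum_move_outer_6:
  "(\<Sum>a\<in>Sa. \<Sum>i1\<in>Si1. \<Sum>i2\<in>Si2. \<Sum>i3\<in>Si3. \<Sum>j1\<in>Sj1. \<Sum>j2\<in>Sj2. \<Sum>j3\<in>Sj3. F a i1 i2 i3 j1 j2 j3) =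
   (\<Sum>i1\<in>Si1. \<Sum>i2\<in>Si2. \<Sum>i3\<in>Si3. \<Sum>j1\<in>Sj1. \<Sum>j2\<in>Sj2. \<Sum>j3\<in>Sj3. \<Sum>a\<in>Sa. F a i1 i2 i3 j1 j2 j3)"
  by (simp only: sum.swap[where A=Sa and B=Si1] sum.swap[where A=Sa and B=Si2] sum.swap[where A=Sa and B=Si3]
      sum.swap[where A=Sa and B=Sj1] sum.swap[where A=Sa and B=Sj2] sum.swap[where A=Sa and B=Sj3])

lemma sum_move_outer2_6:
  "(\<Sum>a\<in>Sa. \<Sum>b\<in>Sb. \<Sum>i1\<in>Si1. \<Sum>i2\<in>Si2. \<Sum>i3\<in>Si3. \<Sum>j1\<in>Sj1. \<Sum>j2\<in>Sj2. \<Sum>j3\<in>Sj3. F a b i1 i2 i3 j1 j2 j3) =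
   (\<Sum>i1\<in>Si1. \<Sum>i2\<in>Si2. \<Sum>i3\<in>Si3. \<Sum>j1\<in>Sj1. \<Sum>j2\<in>Sj2. \<Sum>j3\<in>Sj3. \<Sum>a\<in>Sa. \<Sum>b\<in>Sb. F a b i1 i2 i3 j1 j2 j3)"
  by (simp only: sum.swap[where A=Sa and B=Si1] sum.swap[where A=Sa and B=Si2] sum.swap[where A=Sa and B=Si3]
      sum.swap[where A=Sa and B=Sj1] sum.swap[where A=Sa and B=Sj2] sum.swap[where A=Sa and B=Sj3]
      sum.swap[where A=Sb and B=Sa] sum.swap[where A=Sb and B=Si1] sum.swap[where A=Sb and B=Si2]
      sum.swap[where A=Sb and B=Si3] sum.swap[where A=Sb and B=Sj1] sum.swap[where A=Sb and B=Sj2]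
      sum.swap[where A=Sb and B=Sj3])

lemma sum_leg3_outer_6:
  "(\<Sum>i1\<in>Si1. \<Sum>i2\<in>Si2. \<Sum>i3\<in>Si3. \<Sum>j1\<in>Sj1. \<Sum>j2\<in>Sj2. \<Sum>j3\<in>Sj3. F i1 i2 i3 j1 j2 j3) =
   (\<Sum>i3\<in>Si3. \<Sum>j3\<in>Sj3. \<Sum>j1\<in>Sj1. \<Sum>i1\<in>Si1. \<Sum>i2\<in>Si2. \<Sum>j2\<in>Sj2. F i1 i2 i3 j1 j2 j3)"
  by (simp only: sum.swap[where A=Si1 and B=Si3] sum.swap[where A=Si1 and B=Sj1] sum.swap[where A=Si1 and B=Sj3]
      sum.swap[where A=Si2 and B=Si1] sum.swap[where A=Si2 and B=Si3] sum.swap[where A=Si2 and B=Sj1]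
      sum.swap[where A=Si2 and B=Sj3] sum.swap[where A=Sj1 and B=Si3] sum.swap[where A=Sj1 and B=Sj3]
      sum.swap[where A=Sj2 and B=Si1] sum.swap[where A=Sj2 and B=Si2] sum.swap[where A=Sj2 and B=Si3]
      sum.swap[where A=Sj2 and B=Sj1] sum.swap[where A=Sj2 and B=Sj3] sum.swap[where A=Sj3 and B=Si3])

lemma sum_legs23_outer_6:
  "(\<Sum>i1\<in>Si1. \<Sum>i2\<in>Si2. \<Sum>i3\<in>Si3. \<Sum>j1\<in>Sj1. \<Sum>j2\<in>Sj2. \<Sum>j3\<in>Sj3. F i1 i2 i3 j1 j2 j3) =
   (\<Sum>i2\<in>Si2. \<Sum>i3\<in>Si3. \<Sum>j2\<in>Sj2. \<Sum>j3\<in>Sj3. \<Sum>j1\<in>Sj1. \<Sum>i1\<in>Si1. F i1 i2 i3 j1 j2 j3)"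
  by (simp only: sum.swap[where A=Si1 and B=Si2] sum.swap[where A=Si1 and B=Si3] sum.swap[where A=Si1 and B=Sj1]
      sum.swap[where A=Si1 and B=Sj2] sum.swap[where A=Si1 and B=Sj3] sum.swap[where A=Si3 and B=Si2]
      sum.swap[where A=Sj1 and B=Si2] sum.swap[where A=Sj1 and B=Si3] sum.swap[where A=Sj1 and B=Sj2]
      sum.swap[where A=Sj1 and B=Sj3] sum.swap[where A=Sj2 and B=Si2] sum.swap[where A=Sj2 and B=Si3]
      sum.swap[where A=Sj3 and B=Si2] sum.swap[where A=Sj3 and B=Si3] sum.swap[where A=Sj3 and B=Sj2])

lemma sum_legs12_outer_6:
  "(\<Sum>i1\<in>Si1. \<Sum>i2\<in>Si2. \<Sum>i3\<in>Si3. \<Sum>j1\<in>Sj1. \<Sum>j2\<in>Sj2. \<Sum>j3\<in>Sj3. F i1 i2 i3 j1 j2 j3) =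
   (\<Sum>i1\<in>Si1. \<Sum>i2\<in>Si2. \<Sum>j1\<in>Sj1. \<Sum>j2\<in>Sj2. \<Sum>j3\<in>Sj3. \<Sum>i3\<in>Si3. F i1 i2 i3 j1 j2 j3)"
  by (simp only: sum.swap[where A=Si2 and B=Si1] sum.swap[where A=Si3 and B=Si1] sum.swap[where A=Si3 and B=Si2]
      sum.swap[where A=Si3 and B=Sj1] sum.swap[where A=Si3 and B=Sj2] sum.swap[where A=Si3 and B=Sj3]
      sum.swap[where A=Sj1 and B=Si1] sum.swap[where A=Sj1 and B=Si2] sum.swap[where A=Sj2 and B=Si1]
      sum.swap[where A=Sj2 and B=Si2] sum.swap[where A=Sj2 and B=Sj1] sum.swap[where A=Sj3 and B=Si1]
      sum.swap[where A=Sj3 and B=Si2] sum.swap[where A=Sj3 and B=Sj1] sum.swap[where A=Sj3 and B=Sj2])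

lemma sum_product_scaled:
  "((\<Sum>a\<in>A. \<Sum>b\<in>B. f a * g b * K) :: 'k::field) = K * ((\<Sum>a\<in>A. f a) * (\<Sum>b\<in>B. g b))"
proof -
  have "K * ((\<Sum>a\<in>A. f a) * (\<Sum>b\<in>B. g b)) = K * (\<Sum>a\<in>A. \<Sum>b\<in>B. f a * g b)"
    by (simp only: sum_product)
  also have "\<dots> = (\<Sum>a\<in>A. \<Sum>b\<in>B. K * (f a * g b))"
    by (simp only: sum_distrib_left)
  finally show ?thesis by (simp add: mult_ac)
qed

lemma sum_apply: "(\<Sum>v\<in>S. f v) i = (\<Sum>v\<in>S. f v i :: 'a::comm_monoid_add)"
  by (induction S rule: infinite_finite_induct) (auto simp: zero_fun_def plus_fun_def)

section \<open>Contracting tensor legs with functionals\<close>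

text \<open>contract_fst \<alpha> X is (\<alpha> \<otimes> id)(X) and contract_snd \<alpha> X is (id \<otimes> \<alpha>)(X) for X in H \<otimes> H;
on H \<otimes> H \<otimes> H, contract3_fst \<alpha> is \<alpha> \<otimes> id \<otimes> id, contract3_thd \<alpha> is id \<otimes> id \<otimes> \<alpha> and
contract3_fst_snd \<alpha> \<beta> is \<alpha> \<otimes> \<beta> \<otimes> id.\<close>

definition contract_fst :: "('b::finite \<Rightarrow> 'k::field) \<Rightarrow> ('b \<times> 'b \<Rightarrow> 'k) \<Rightarrow> 'b \<Rightarrow> 'k" where
  "contract_fst \<alpha> X = (\<lambda>c. \<Sum>a\<in>UNIV. \<alpha> a * X (a, c))"

definition contract_snd :: "('b::finite \<Rightarrow> 'k::field) \<Rightarrow> ('b \<times> 'b \<Rightarrow> 'k) \<Rightarrow> 'b \<Rightarrow> 'k" where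
  "contract_snd \<alpha> X = (\<lambda>a. \<Sum>c\<in>UNIV. X (a, c) * \<alpha> c)"

definition contract3_fst :: "('b::finite \<Rightarrow> 'k::field) \<Rightarrow> ('b \<times> 'b \<times> 'b \<Rightarrow> 'k) \<Rightarrow> 'b \<times> 'b \<Rightarrow> 'k" where
  "contract3_fst \<alpha> T = (\<lambda>(a, b). \<Sum>k\<in>UNIV. \<alpha> k * T (k, a, b))"

definition contract3_thd :: "('b::finite \<Rightarrow> 'k::field) \<Rightarrow> ('b \<times> 'b \<times> 'b \<Rightarrow> 'k) \<Rightarrow> 'b \<times> 'b \<Rightarrow> 'k" where
  "contract3_thd \<alpha> T = (\<lambda>(a, b). \<Sum>c\<in>UNIV. T (a, b, c) * \<alpha> c)"

definition contract3_fst_snd ::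
    "('b::finite \<Rightarrow> 'k::field) \<Rightarrow> ('b \<Rightarrow> 'k) \<Rightarrow> ('b \<times> 'b \<times> 'b \<Rightarrow> 'k) \<Rightarrow> 'b \<Rightarrow> 'k" where
  "contract3_fst_snd \<alpha> \<beta> T = (\<lambda>c. \<Sum>a\<in>UNIV. \<Sum>b\<in>UNIV. \<alpha> a * \<beta> b * T (a, b, c))"

definition multiplicative :: "('b::finite, 'k::field) hopf_sc \<Rightarrow> ('b \<Rightarrow> 'k) \<Rightarrow> bool" where
  "multiplicative H \<alpha> \<longleftrightarrow> (\<forall>a b. (\<Sum>k\<in>UNIV. mc H a b k * \<alpha> k) = \<alpha> a * \<alpha> b)"

lemma multiplicativeD: "multiplicative H \<alpha> \<Longrightarrow> (\<Sum>k\<in>UNIV. mc H a b k * \<alpha> k) = \<alpha> a * \<alpha> b"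
  by (simp add: multiplicative_def)

lemma dual_grouplikes_iff: "\<alpha> \<in> dual_grouplikes H \<longleftrightarrow> \<alpha> \<noteq> (\<lambda>_. 0) \<and> multiplicative H \<alpha>"
proof -
  have "dcomul H \<alpha> = (\<lambda>(a, b). \<alpha> a * \<alpha> b) \<longleftrightarrow> multiplicative H \<alpha>"
    unfolding multiplicative_def dcomul_def fun_eq_iff by (auto simp: mult.commute)
  then show ?thesis unfolding dual_grouplikes_def by auto
qed

lemma contract_fst_tmul:
  assumes "multiplicative H \<alpha>"
  shows "contract_fst \<alpha> (tmul H X Y) = hmul H (contract_fst \<alpha> X) (contract_fst \<alpha> Y)"
proof
  fix c
  have "contract_fst \<alpha> (tmul H X Y) c = (\<Sum>a\<in>UNIV. \<Sum>i1\<in>UNIV. \<Sum>i2\<in>UNIV. \<Sum>j1\<in>UNIV. \<Sum>j2\<in>UNIV.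
      \<alpha> a * (X (i1, i2) * Y (j1, j2) * mc H i1 j1 a * mc H i2 j2 c))"
    by (simp add: contract_fst_def tmul_def sum_distrib_left)
  also have "\<dots> = (\<Sum>i1\<in>UNIV. \<Sum>i2\<in>UNIV. \<Sum>j1\<in>UNIV. \<Sum>j2\<in>UNIV.
      (X (i1, i2) * Y (j1, j2) * mc H i2 j2 c) * (\<Sum>a\<in>UNIV. mc H i1 j1 a * \<alpha> a))"
    by (subst sum_move_outer_4) (simp add: sum_distrib_left mult_ac)
  also have "\<dots> = (\<Sum>i1\<in>UNIV. \<Sum>i2\<in>UNIV. \<Sum>j1\<in>UNIV. \<Sum>j2\<in>UNIV.
      (X (i1, i2) * Y (j1, j2) * mc H i2 j2 c) * (\<alpha> i1 * \<alpha> j1))"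
    using assms by (simp add: multiplicativeD)
  also have "\<dots> = hmul H (contract_fst \<alpha> X) (contract_fst \<alpha> Y) c"
    by (subst sum_pair_up_4_swapped) (simp add: hmul_def contract_fst_def sum_distrib_left sum_distrib_right mult_ac)
  finally show "contract_fst \<alpha> (tmul H X Y) c = hmul H (contract_fst \<alpha> X) (contract_fst \<alpha> Y) c" .
qed

lemma contract_snd_tmul:
  assumes "multiplicative H \<alpha>"
  shows "contract_snd \<alpha> (tmul H X Y) = hmul H (contract_snd \<alpha> X) (contract_snd \<alpha> Y)"
proof
  fix c
  have "contract_snd \<alpha> (tmul H X Y) c = (\<Sum>a\<in>UNIV. \<Sum>i1\<in>UNIV. \<Sum>i2\<in>UNIV. \<Sum>j1\<in>UNIV. \<Sum>j2\<in>UNIV.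
      \<alpha> a * (X (i1, i2) * Y (j1, j2) * mc H i1 j1 c * mc H i2 j2 a))"
    by (simp add: contract_snd_def tmul_def sum_distrib_left sum_distrib_right mult_ac)
  also have "\<dots> = (\<Sum>i1\<in>UNIV. \<Sum>i2\<in>UNIV. \<Sum>j1\<in>UNIV. \<Sum>j2\<in>UNIV.
      (X (i1, i2) * Y (j1, j2) * mc H i1 j1 c) * (\<Sum>a\<in>UNIV. mc H i2 j2 a * \<alpha> a))"
    by (subst sum_move_outer_4) (simp add: sum_distrib_left mult_ac)
  also have "\<dots> = (\<Sum>i1\<in>UNIV. \<Sum>i2\<in>UNIV. \<Sum>j1\<in>UNIV. \<Sum>j2\<in>UNIV.
      (X (i1, i2) * Y (j1, j2) * mc H i1 j1 c) * (\<alpha> i2 * \<alpha> j2))"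
    using assms by (simp add: multiplicativeD)
  also have "\<dots> = hmul H (contract_snd \<alpha> X) (contract_snd \<alpha> Y) c"
    by (subst sum_pair_up_fst_4) (simp add: hmul_def contract_snd_def sum_distrib_left sum_distrib_right mult_ac)
  finally show "contract_snd \<alpha> (tmul H X Y) c = hmul H (contract_snd \<alpha> X) (contract_snd \<alpha> Y) c" .
qed

lemma tmul_pure_tensors:
  "tmul H (\<lambda>(a, b). u a * v b) (\<lambda>(a, b). s a * t b) = (\<lambda>(k1, k2). hmul H u s k1 * hmul H v t k2)"
proof (rule ext, clarify)
  fix k1 k2
  have "tmul H (\<lambda>(a, b). u a * v b) (\<lambda>(a, b). s a * t b) (k1, k2) =
    (\<Sum>i1\<in>UNIV. \<Sum>i2\<in>UNIV. \<Sum>j1\<in>UNIV. \<Sum>j2\<in>UNIV. (u i1 * s j1 * mc H i1 j1 k1) * (v i2 * t j2 * mc H i2 j2 k2))"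
    by (simp add: tmul_def mult_ac)
  also have "\<dots> = hmul H u s k1 * hmul H v t k2"
    by (subst sum_pair_up_4) (simp add: hmul_def sum_distrib_left sum_distrib_right)
  finally show "tmul H (\<lambda>(a, b). u a * v b) (\<lambda>(a, b). s a * t b) (k1, k2) = hmul H u s k1 * hmul H v t k2" .
qed

lemma contract3_fst_snd_t3mul:
  assumes "multiplicative H \<alpha>" "multiplicative H \<beta>"
  shows "contract3_fst_snd \<alpha> \<beta> (t3mul H X Y) =
    hmul H (contract3_fst_snd \<alpha> \<beta> X) (contract3_fst_snd \<alpha> \<beta> Y)"
proof
  fix c
  have "contract3_fst_snd \<alpha> \<beta> (t3mul H X Y) c =
      (\<Sum>a\<in>UNIV. \<Sum>b\<in>UNIV. \<Sum>i1\<in>UNIV. \<Sum>i2\<in>UNIV. \<Sum>i3\<in>UNIV. \<Sum>j1\<in>UNIV. \<Sum>j2\<in>UNIV. \<Sum>j3\<in>UNIV.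
        (mc H i1 j1 a * \<alpha> a) * (mc H i2 j2 b * \<beta> b) * (X (i1, i2, i3) * Y (j1, j2, j3) * mc H i3 j3 c))"
    by (simp add: contract3_fst_snd_def t3mul_def sum_distrib_left mult_ac)
  also have "\<dots> = (\<Sum>i1\<in>UNIV. \<Sum>i2\<in>UNIV. \<Sum>i3\<in>UNIV. \<Sum>j1\<in>UNIV. \<Sum>j2\<in>UNIV. \<Sum>j3\<in>UNIV.
      (X (i1, i2, i3) * Y (j1, j2, j3) * mc H i3 j3 c) * ((\<alpha> i1 * \<alpha> j1) * (\<beta> i2 * \<beta> j2)))"
    by (subst sum_move_outer2_6)
      (simp only: sum_product_scaled multiplicativeD[OF assms(1)] multiplicativeD[OF assms(2)])
  also have "\<dots> = hmul H (contract3_fst_snd \<alpha> \<beta> X) (contract3_fst_snd \<alpha> \<beta> Y) c"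
    by (subst sum_leg3_outer_6)
      (simp add: hmul_def contract3_fst_snd_def sum_distrib_left sum_distrib_right mult_ac)
  finally show "contract3_fst_snd \<alpha> \<beta> (t3mul H X Y) c =
      hmul H (contract3_fst_snd \<alpha> \<beta> X) (contract3_fst_snd \<alpha> \<beta> Y) c" .
qed

lemma contract3_fst_t3mul:
  assumes "multiplicative H \<alpha>"
  shows "contract3_fst \<alpha> (t3mul H X Y) = tmul H (contract3_fst \<alpha> X) (contract3_fst \<alpha> Y)"
proof (rule ext, clarify)
  fix k2 k3
  have "contract3_fst \<alpha> (t3mul H X Y) (k2, k3) =
      (\<Sum>a\<in>UNIV. \<Sum>i1\<in>UNIV. \<Sum>i2\<in>UNIV. \<Sum>i3\<in>UNIV. \<Sum>j1\<in>UNIV. \<Sum>j2\<in>UNIV. \<Sum>j3\<in>UNIV.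
        (mc H i1 j1 a * \<alpha> a) * (X (i1, i2, i3) * Y (j1, j2, j3) * mc H i2 j2 k2 * mc H i3 j3 k3))"
    by (simp add: contract3_fst_def t3mul_def sum_distrib_left mult_ac)
  also have "\<dots> = (\<Sum>i1\<in>UNIV. \<Sum>i2\<in>UNIV. \<Sum>i3\<in>UNIV. \<Sum>j1\<in>UNIV. \<Sum>j2\<in>UNIV. \<Sum>j3\<in>UNIV.
      (\<alpha> i1 * \<alpha> j1) * (X (i1, i2, i3) * Y (j1, j2, j3) * mc H i2 j2 k2 * mc H i3 j3 k3))"
    by (subst sum_move_outer_6) (simp only: sum_distrib_right[symmetric] multiplicativeD[OF assms])
  also have "\<dots> = tmul H (contract3_fst \<alpha> X) (contract3_fst \<alpha> Y) (k2, k3)"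
    by (subst sum_legs23_outer_6) (simp add: tmul_def contract3_fst_def sum_distrib_left sum_distrib_right mult_ac)
  finally show "contract3_fst \<alpha> (t3mul H X Y) (k2, k3) =
      tmul H (contract3_fst \<alpha> X) (contract3_fst \<alpha> Y) (k2, k3)" .
qed

lemma contract3_thd_t3mul:
  assumes "multiplicative H \<alpha>"
  shows "contract3_thd \<alpha> (t3mul H X Y) = tmul H (contract3_thd \<alpha> X) (contract3_thd \<alpha> Y)"
proof (rule ext, clarify)
  fix k1 k2
  have "contract3_thd \<alpha> (t3mul H X Y) (k1, k2) =
      (\<Sum>a\<in>UNIV. \<Sum>i1\<in>UNIV. \<Sum>i2\<in>UNIV. \<Sum>i3\<in>UNIV. \<Sum>j1\<in>UNIV. \<Sum>j2\<in>UNIV. \<Sum>j3\<in>UNIV.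
        (mc H i3 j3 a * \<alpha> a) * (X (i1, i2, i3) * Y (j1, j2, j3) * mc H i1 j1 k1 * mc H i2 j2 k2))"
    by (simp add: contract3_thd_def t3mul_def sum_distrib_left sum_distrib_right mult_ac)
  also have "\<dots> = (\<Sum>i1\<in>UNIV. \<Sum>i2\<in>UNIV. \<Sum>i3\<in>UNIV. \<Sum>j1\<in>UNIV. \<Sum>j2\<in>UNIV. \<Sum>j3\<in>UNIV.
      (\<alpha> i3 * \<alpha> j3) * (X (i1, i2, i3) * Y (j1, j2, j3) * mc H i1 j1 k1 * mc H i2 j2 k2))"
    by (subst sum_move_outer_6) (simp only: sum_distrib_right[symmetric] multiplicativeD[OF assms])
  also have "\<dots> = tmul H (contract3_thd \<alpha> X) (contract3_thd \<alpha> Y) (k1, k2)"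
    by (subst sum_legs12_outer_6) (simp add: tmul_def contract3_thd_def sum_distrib_left sum_distrib_right mult_ac)
  finally show "contract3_thd \<alpha> (t3mul H X Y) (k1, k2) =
      tmul H (contract3_thd \<alpha> X) (contract3_thd \<alpha> Y) (k1, k2)" .
qed

lemma contract3_fst_snd_delta_id: "contract3_fst_snd \<alpha> \<beta> (delta_id H R) = contract_fst (dmul H \<alpha> \<beta>) R"
proof
  fix c
  have "contract3_fst_snd \<alpha> \<beta> (delta_id H R) c =
      (\<Sum>a\<in>UNIV. \<Sum>b\<in>UNIV. \<Sum>i\<in>UNIV. (dc H i a b * \<alpha> a * \<beta> b) * R (i, c))"
    by (simp add: contract3_fst_snd_def delta_id_def sum_distrib_left mult_ac)
  also have "\<dots> = contract_fst (dmul H \<alpha> \<beta>) R c"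
    by (subst sum_move_inner_2) (simp add: contract_fst_def dmul_def sum_distrib_right)
  finally show "contract3_fst_snd \<alpha> \<beta> (delta_id H R) c = contract_fst (dmul H \<alpha> \<beta>) R c" .
qed

lemma contract3_fst_id_delta: "contract3_fst \<alpha> (id_delta H R) = hcomul H (contract_fst \<alpha> R)"
proof (rule ext, clarify)
  fix a b
  have "contract3_fst \<alpha> (id_delta H R) (a, b) = (\<Sum>k\<in>UNIV. \<Sum>i\<in>UNIV. (\<alpha> k * R (k, i)) * dc H i a b)"
    by (simp add: contract3_fst_def id_delta_def sum_distrib_left mult_ac)
  also have "\<dots> = hcomul H (contract_fst \<alpha> R) (a, b)"
    by (subst sum.swap) (simp add: hcomul_def contract_fst_def sum_distrib_right)
  finally show "contract3_fst \<alpha> (id_delta H R) (a, b) = hcomul H (contract_fst \<alpha> R) (a, b)" .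
qed

lemma contract3_thd_delta_id: "contract3_thd \<alpha> (delta_id H R) = hcomul H (contract_snd \<alpha> R)"
proof (rule ext, clarify)
  fix a b
  have "contract3_thd \<alpha> (delta_id H R) (a, b) = (\<Sum>c\<in>UNIV. \<Sum>i\<in>UNIV. (R (i, c) * \<alpha> c) * dc H i a b)"
    by (simp add: contract3_thd_def delta_id_def sum_distrib_right sum_distrib_left mult_ac)
  also have "\<dots> = hcomul H (contract_snd \<alpha> R) (a, b)"
    by (subst sum.swap) (simp add: hcomul_def contract_snd_def sum_distrib_right)
  finally show "contract3_thd \<alpha> (delta_id H R) (a, b) = hcomul H (contract_snd \<alpha> R) (a, b)" .
qed

lemma contract3_fst_snd_leg13: "contract3_fst_snd \<alpha> \<beta> (leg13 H R) = (\<lambda>c. eval \<beta> (un H) * contract_fst \<alpha> R c)"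
  by (simp add: contract3_fst_snd_def leg13_def Defs.eval_def contract_fst_def sum_product mult_ac,
      rule ext, subst sum.swap, simp add: mult_ac)

lemma contract3_fst_snd_leg23: "contract3_fst_snd \<alpha> \<beta> (leg23 H R) = (\<lambda>c. eval \<alpha> (un H) * contract_fst \<beta> R c)"
  by (simp add: contract3_fst_snd_def leg23_def Defs.eval_def contract_fst_def sum_product mult_ac)

lemma contract3_fst_leg13: "contract3_fst \<alpha> (leg13 H R) = (\<lambda>(a, b). un H a * contract_fst \<alpha> R b)"
  by (rule ext, clarify) (simp add: contract3_fst_def leg13_def contract_fst_def sum_distrib_left mult_ac)

lemma contract3_fst_leg12: "contract3_fst \<alpha> (leg12 H R) = (\<lambda>(a, b). contract_fst \<alpha> R a * un H b)"
  by (rule ext, clarify)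
    (simp add: contract3_fst_def leg12_def contract_fst_def sum_distrib_left sum_distrib_right mult_ac)

lemma contract3_thd_leg13: "contract3_thd \<alpha> (leg13 H R) = (\<lambda>(a, b). contract_snd \<alpha> R a * un H b)"
  by (rule ext, clarify)
    (simp add: contract3_thd_def leg13_def contract_snd_def sum_distrib_left sum_distrib_right mult_ac)

lemma contract3_thd_leg23: "contract3_thd \<alpha> (leg23 H R) = (\<lambda>(a, b). un H a * contract_snd \<alpha> R b)"
  by (rule ext, clarify) (simp add: contract3_thd_def leg23_def contract_snd_def sum_distrib_left mult_ac)

lemma contract_fst_tone: "contract_fst \<alpha> (tone H) = (\<lambda>c. eval \<alpha> (un H) * un H c)"
  by (simp add: contract_fst_def tone_def Defs.eval_def sum_distrib_left sum_distrib_right mult_ac)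

lemma contract_snd_tone: "contract_snd \<alpha> (tone H) = (\<lambda>c. eval \<alpha> (un H) * un H c)"
  by (simp add: contract_snd_def tone_def Defs.eval_def sum_distrib_left mult_ac)

lemma contract_fst_flip: "contract_fst \<alpha> (flip X) = contract_snd \<alpha> X"
  by (simp add: contract_fst_def contract_snd_def flip_def mult_ac)

lemma contract_snd_flip: "contract_snd \<alpha> (flip X) = contract_fst \<alpha> X"
  by (simp add: contract_fst_def contract_snd_def flip_def mult_ac)

lemma eval_contract_snd_self: "eval \<beta> (contract_snd \<beta> X) = eval \<beta> (contract_fst \<beta> X)"
  by (simp add: Defs.eval_def contract_fst_def contract_snd_def sum_distrib_left mult_ac)
    (subst sum.swap, simp add: mult_ac)

lemma sum_bvec: "(\<Sum>k\<in>UNIV. bvec (a::'b::finite) k * f k) = (f a :: 'k::field)"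
  unfolding bvec_def by (simp add: of_bool_def[symmetric])

lemma eval_bvec: "eval \<alpha> (bvec a) = \<alpha> a"
  by (simp add: Defs.eval_def bvec_def if_distrib cong: if_cong)

lemma hcomul_bvec: "hcomul H (bvec k) = (\<lambda>(a, b). dc H k a b)"
  unfolding bvec_def by (rule ext, clarify) (simp add: hcomul_def of_bool_def[symmetric])

lemma hmul_bvec: "hmul H (bvec a) (bvec b) = mc H a b"
proof
  fix k
  have "hmul H (bvec a) (bvec b) k = (\<Sum>i\<in>UNIV. bvec a i * (\<Sum>j\<in>UNIV. bvec b j * mc H i j k))"
    by (simp add: hmul_def sum_distrib_left mult_ac)
  then show "hmul H (bvec a) (bvec b) k = mc H a b k" by (simp add: sum_bvec)
qed

lemma hmul_zero_left: "hmul H (\<lambda>_. 0) x = (\<lambda>_. 0)"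
  by (simp add: hmul_def)

lemma eval_hmul:
  assumes "multiplicative H \<alpha>"
  shows "eval \<alpha> (hmul H x y) = eval \<alpha> x * eval \<alpha> y"
proof -
  have "eval \<alpha> (hmul H x y) = (\<Sum>k\<in>UNIV. \<Sum>i\<in>UNIV. \<Sum>j\<in>UNIV. (x i * y j) * (mc H i j k * \<alpha> k))"
    by (simp add: Defs.eval_def hmul_def sum_distrib_left mult_ac)
  also have "\<dots> = (\<Sum>i\<in>UNIV. \<Sum>j\<in>UNIV. (x i * y j) * (\<alpha> i * \<alpha> j))"
    by (subst sum_move_outer_2) (simp only: sum_distrib_left[symmetric] multiplicativeD[OF assms])
  also have "\<dots> = eval \<alpha> x * eval \<alpha> y"
    by (simp add: Defs.eval_def sum_product mult_ac)
  finally show ?thesis .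
qed

lemma eval_double_sum:
  "eval \<alpha> (\<lambda>j. \<Sum>a\<in>UNIV. \<Sum>b\<in>UNIV. c a b * F a b j) = (\<Sum>a\<in>UNIV. \<Sum>b\<in>UNIV. c a b * eval \<alpha> (F a b))"
proof -
  have "eval \<alpha> (\<lambda>j. \<Sum>a\<in>UNIV. \<Sum>b\<in>UNIV. c a b * F a b j) =
      (\<Sum>j\<in>UNIV. \<Sum>a\<in>UNIV. \<Sum>b\<in>UNIV. \<alpha> j * (c a b * F a b j))"
    by (simp add: Defs.eval_def sum_distrib_left)
  also have "\<dots> = (\<Sum>a\<in>UNIV. \<Sum>b\<in>UNIV. c a b * eval \<alpha> (F a b))"
    by (subst sum_move_outer_2) (simp add: Defs.eval_def sum_distrib_left mult_ac)
  finally show ?thesis .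
qed

lemma eval_contract_fst_hcomul: "eval \<beta> (contract_fst \<alpha> (hcomul H x)) = (\<Sum>k\<in>UNIV. x k * dmul H \<alpha> \<beta> k)"
proof -
  have "eval \<beta> (contract_fst \<alpha> (hcomul H x)) =
      (\<Sum>d\<in>UNIV. \<Sum>c\<in>UNIV. \<Sum>k\<in>UNIV. x k * (dc H k c d * \<alpha> c * \<beta> d))"
    by (simp add: Defs.eval_def contract_fst_def hcomul_def sum_distrib_left sum_distrib_right mult_ac)
  also have "\<dots> = (\<Sum>k\<in>UNIV. x k * dmul H \<alpha> \<beta> k)"
    by (subst sum_reverse_3) (simp add: dmul_def sum_distrib_left)
  finally show ?thesis .
qed

lemma eval_dmul: "eval (dmul H \<alpha> \<beta>) x = eval \<beta> (contract_fst \<alpha> (hcomul H x))"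
  unfolding eval_contract_fst_hcomul by (simp add: Defs.eval_def mult.commute)

lemma eval_scale: "eval \<alpha> (\<lambda>j. c * x j) = c * eval \<alpha> x"
  by (simp add: Defs.eval_def sum_distrib_left mult_ac)

lemma dmul_eq_eval: "dmul H \<alpha> \<beta> k = eval \<beta> (contract_fst \<alpha> (hcomul H (bvec k)))"
  by (simp add: eval_contract_fst_hcomul sum_bvec)

lemma contract_fst_hcomul_contract_fst:
  assumes "delta_id H X = id_delta H X"
  shows "contract_fst \<alpha> (hcomul H (contract_fst \<beta> X)) = contract_fst (dmul H \<beta> \<alpha>) X"
proof
  fix c
  have "contract_fst \<alpha> (hcomul H (contract_fst \<beta> X)) c =
      (\<Sum>a0\<in>UNIV. \<Sum>i\<in>UNIV. \<Sum>a\<in>UNIV. (\<beta> a * \<alpha> a0) * (X (a, i) * dc H i a0 c))"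
    by (simp add: contract_fst_def hcomul_def sum_distrib_left sum_distrib_right mult_ac)
  also have "\<dots> = (\<Sum>a\<in>UNIV. \<Sum>a0\<in>UNIV. (\<beta> a * \<alpha> a0) * id_delta H X (a, a0, c))"
    by (subst sum_move_inner_2) (simp add: id_delta_def sum_distrib_left)
  also have "\<dots> = (\<Sum>a\<in>UNIV. \<Sum>a0\<in>UNIV. \<Sum>i\<in>UNIV. (\<beta> a * \<alpha> a0) * (X (i, c) * dc H i a a0))"
    by (simp add: assms[symmetric] delta_id_def sum_distrib_left)
  also have "\<dots> = contract_fst (dmul H \<beta> \<alpha>) X c"
    by (subst sum_move_inner_2) (simp add: contract_fst_def dmul_def sum_distrib_left sum_distrib_right mult_ac)
  finally show "contract_fst \<alpha> (hcomul H (contract_fst \<beta> X)) c = contract_fst (dmul H \<beta> \<alpha>) X c" .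
qed

section \<open>Orders of elements\<close>

lemma (in monoid) group_if_finite_left_cancel:
  assumes fin: "finite (carrier G)"
    and cancel: "\<And>x a b. \<lbrakk>x \<in> carrier G; a \<in> carrier G; b \<in> carrier G; x \<otimes> a = x \<otimes> b\<rbrakk> \<Longrightarrow> a = b"
  shows "group G"
proof (rule group_l_invI)
  fix x assume x: "x \<in> carrier G"
  have "\<not> inj (\<lambda>n::nat. x [^] n)"
  proof
    assume "inj (\<lambda>n::nat. x [^] n)"
    moreover have "finite (range (\<lambda>n::nat. x [^] n))"
      using x by (intro finite_subset[OF _ fin]) auto
    ultimately show False using finite_imageD by fastforce
  qed
  then obtain m n :: nat where "m \<noteq> n" and mn: "x [^] m = x [^] n"
    unfolding inj_def by blast
  obtain m d :: nat where "0 < d" and md: "x [^] (m + d) = x [^] m"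
  proof (cases "m < n")
    case True
    then show ?thesis using that[of "n - m" m] mn by auto
  next
    case False
    then show ?thesis using that[of "m - n" n] mn \<open>m \<noteq> n\<close> by auto
  qed
  have pow: "x [^] d = \<one>"
  proof (rule cancel)
    show "x [^] m \<otimes> x [^] d = x [^] m \<otimes> \<one>"
      using x by (simp add: nat_pow_mult md)
  qed (use x in auto)
  have "x [^] (d - 1) \<otimes> x = x [^] Suc (d - 1)"
    by (simp only: nat_pow_Suc)
  then show "\<exists>y\<in>carrier G. y \<otimes> x = \<one>"
    using x pow \<open>0 < d\<close> by (intro bexI[of _ "x [^] (d - 1)"]) auto
qed

lemma (in group) exists_elem_of_prime_ord:
  assumes fin: "finite (carrier G)" and p: "prime p" and dvd: "p dvd order G"
  obtains x where "x \<in> carrier G" and "ord x = p"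
proof -
  obtain K where K: "subgroup K G" "card K = p"
    using sylow_thm[OF p is_group, of 1 "order G div p"] fin dvd by auto
  have "\<not> K \<subseteq> {\<one>}"
    using K(2) prime_gt_1_nat[OF p] card_mono[of "{\<one>}" K] by auto
  then obtain x where x: "x \<in> K" "x \<noteq> \<one>" by blast
  interpret K: group "G\<lparr>carrier := K\<rparr>"
    by (rule subgroup.subgroup_is_group[OF K(1) is_group])
  have "x [^] p = \<one>"
    using K.pow_order_eq_1[of x] x K(2) by (simp add: order_def flip: nat_pow_consistent)
  moreover have "x \<in> carrier G" using x K(1) subgroup.subset by blast
  ultimately have "ord x dvd p" and "ord x \<noteq> 1"
    using pow_eq_id ord_eq_1 x(2) by auto
  then have "ord x = p" using p by (auto simp: prime_nat_iff)
  with \<open>x \<in> carrier G\<close> show ?thesis by (rule that)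
qed

lemma elem_ord_eqI:
  assumes "0 < d" and "\<And>n. (mul x ^^ n) e = e \<longleftrightarrow> d dvd n"
  shows "elem_ord mul e x = d"
  unfolding elem_ord_def assms(2)
  by (rule Least_equality) (use assms(1) in \<open>auto dest: dvd_imp_le\<close>)

lemma power_odd_eq_self_if_square_one:
  fixes w :: "'a::monoid_mult"
  assumes "w * w = 1" and "odd n"
  shows "w ^ n = w"
proof -
  obtain k where "n = Suc (2 * k)" using assms(2) by (metis oddE Suc_eq_plus1)
  then show ?thesis using assms(1) by (simp add: power_mult power2_eq_square)
qed

section \<open>The group of characters of H\<close>

definition dual_antipode :: "('b::finite, 'k::field) hopf_sc \<Rightarrow> ('b \<Rightarrow> 'k) \<Rightarrow> 'b \<Rightarrow> 'k" where
  "dual_antipode H \<alpha> = (\<lambda>a. eval \<alpha> (hanti H (bvec a)))"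

definition dual_group :: "('b::finite, 'k::field) hopf_sc \<Rightarrow> ('b \<Rightarrow> 'k) monoid" where
  "dual_group H = \<lparr>carrier = dual_grouplikes H, mult = dmul H, one = cu H\<rparr>"

lemma dual_group_simps [simp]:
  "carrier (dual_group H) = dual_grouplikes H"
  "mult (dual_group H) = dmul H"
  "one (dual_group H) = cu H"
  by (simp_all add: dual_group_def)

locale hopf_algebra =
  fixes H :: "('b::finite, 'k::field) hopf_sc"
  assumes is_hopf: "is_hopf H"
begin

lemma
  shows hmul_assoc: "hmul H (hmul H x y) z = hmul H x (hmul H y z)"
    and hmul_un_left: "hmul H (un H) x = x"
    and hmul_un_right: "hmul H x (un H) = x"
    and hcomul_coassoc: "delta_id H (hcomul H x) = id_delta H (hcomul H x)"
    and hcomul_counit_left: "(\<lambda>c. \<Sum>a\<in>UNIV. hcomul H x (a, c) * cu H a) = x"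
    and hcomul_counit_right: "(\<lambda>a. \<Sum>c\<in>UNIV. hcomul H x (a, c) * cu H c) = x"
    and hcomul_hmul: "hcomul H (hmul H x y) = tmul H (hcomul H x) (hcomul H y)"
    and hcomul_un: "hcomul H (un H) = tone H"
    and hcounit_hmul: "hcounit H (hmul H x y) = hcounit H x * hcounit H y"
    and hcounit_un: "hcounit H (un H) = 1"
    and antipode_left: "(\<lambda>k. \<Sum>a\<in>UNIV. \<Sum>b\<in>UNIV. hcomul H x (a, b) * hmul H (hanti H (bvec a)) (bvec b) k)
            = (\<lambda>k. hcounit H x * un H k)"
  using is_hopf unfolding is_hopf_def by auto

lemma un_nonzero: "un H \<noteq> (\<lambda>_. 0)"
  using hcounit_un by (auto simp: hcounit_def)

lemma nonzero_if_right_invertible: "hmul H x y = un H \<Longrightarrow> x \<noteq> (\<lambda>_. 0)"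
  using un_nonzero hmul_zero_left by metis

lemma eval_un:
  assumes "\<alpha> \<in> dual_grouplikes H"
  shows "eval \<alpha> (un H) = 1"
proof -
  from assms have "\<alpha> \<noteq> (\<lambda>_. 0)" and m: "multiplicative H \<alpha>" by (auto simp: dual_grouplikes_iff)
  then obtain a where a: "\<alpha> a \<noteq> 0" by auto
  have "\<alpha> a = eval \<alpha> (hmul H (un H) (bvec a))" by (simp add: hmul_un_left eval_bvec)
  also have "\<dots> = eval \<alpha> (un H) * \<alpha> a" by (simp add: eval_hmul[OF m] eval_bvec)
  finally show ?thesis using a by simp
qed

lemma contract_fst_cu_hcomul: "contract_fst (cu H) (hcomul H h) = h"
  using hcomul_counit_left[of h] by (simp add: contract_fst_def mult.commute)

lemma dmul_assoc: "dmul H (dmul H f g) h = dmul H f (dmul H g h)"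
proof
  fix k
  have "dmul H f (dmul H g h) k = eval (dmul H g h) (contract_fst f (hcomul H (bvec k)))"
    by (rule dmul_eq_eval)
  also have "\<dots> = eval h (contract_fst g (hcomul H (contract_fst f (hcomul H (bvec k)))))"
    by (simp add: eval_dmul)
  also have "\<dots> = dmul H (dmul H f g) h k"
    by (simp add: contract_fst_hcomul_contract_fst hcomul_coassoc dmul_eq_eval)
  finally show "dmul H (dmul H f g) h k = dmul H f (dmul H g h) k" ..
qed

lemma multiplicative_dmul:
  assumes "multiplicative H \<alpha>" "multiplicative H \<beta>"
  shows "multiplicative H (dmul H \<alpha> \<beta>)"
  unfolding multiplicative_def
proof (intro allI)
  fix a b
  have "(\<Sum>k\<in>UNIV. mc H a b k * dmul H \<alpha> \<beta> k) =
      eval \<beta> (contract_fst \<alpha> (hcomul H (hmul H (bvec a) (bvec b))))"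
    by (simp add: eval_contract_fst_hcomul hmul_bvec)
  also have "\<dots> = eval \<beta> (hmul H (contract_fst \<alpha> (hcomul H (bvec a))) (contract_fst \<alpha> (hcomul H (bvec b))))"
    by (simp add: hcomul_hmul contract_fst_tmul[OF assms(1)])
  also have "\<dots> = dmul H \<alpha> \<beta> a * dmul H \<alpha> \<beta> b"
    by (simp add: eval_hmul[OF assms(2)] dmul_eq_eval)
  finally show "(\<Sum>k\<in>UNIV. mc H a b k * dmul H \<alpha> \<beta> k) = dmul H \<alpha> \<beta> a * dmul H \<alpha> \<beta> b" .
qed

lemma eval_dmul_un:
  assumes "\<alpha> \<in> dual_grouplikes H" "\<beta> \<in> dual_grouplikes H"
  shows "eval (dmul H \<alpha> \<beta>) (un H) = 1"
proof -
  have "eval (dmul H \<alpha> \<beta>) (un H) = eval \<beta> (contract_fst \<alpha> (hcomul H (un H)))"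
    by (rule eval_dmul)
  also have "\<dots> = 1"
    by (simp add: hcomul_un contract_fst_tone eval_un[OF assms(1)] eval_un[OF assms(2)])
  finally show ?thesis .
qed

lemma dmul_closed:
  assumes "\<alpha> \<in> dual_grouplikes H" "\<beta> \<in> dual_grouplikes H"
  shows "dmul H \<alpha> \<beta> \<in> dual_grouplikes H"
proof -
  have "dmul H \<alpha> \<beta> \<noteq> (\<lambda>_. 0)"
    using eval_dmul_un[OF assms] by (auto simp: Defs.eval_def)
  moreover have "multiplicative H (dmul H \<alpha> \<beta>)"
    using assms by (intro multiplicative_dmul) (auto simp: dual_grouplikes_iff)
  ultimately show ?thesis by (simp add: dual_grouplikes_iff)
qed

lemma dc_counit_left: "(\<Sum>a\<in>UNIV. dc H k a c * cu H a) = bvec k c"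
  using fun_cong[OF hcomul_counit_left[of "bvec k"], of c] by (simp add: hcomul_bvec)

lemma dc_counit_right: "(\<Sum>c\<in>UNIV. dc H k a c * cu H c) = bvec k a"
  using fun_cong[OF hcomul_counit_right[of "bvec k"], of a] by (simp add: hcomul_bvec)

lemma dmul_cu_left: "dmul H (cu H) f = f"
proof
  fix k
  have "dmul H (cu H) f k = (\<Sum>b\<in>UNIV. (\<Sum>a\<in>UNIV. dc H k a b * cu H a) * f b)"
    unfolding dmul_def by (subst sum.swap) (simp add: sum_distrib_left sum_distrib_right mult_ac)
  then show "dmul H (cu H) f k = f k" by (simp add: dc_counit_left sum_bvec)
qed

lemma dmul_cu_right: "dmul H f (cu H) = f"
proof
  fix k
  have "dmul H f (cu H) k = (\<Sum>a\<in>UNIV. (\<Sum>b\<in>UNIV. dc H k a b * cu H b) * f a)"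
    by (simp add: dmul_def sum_distrib_left sum_distrib_right mult_ac)
  then show "dmul H f (cu H) k = f k" by (simp add: dc_counit_right sum_bvec)
qed

lemma cu_grouplike: "cu H \<in> dual_grouplikes H"
proof -
  have "multiplicative H (cu H)"
    unfolding multiplicative_def
  proof (intro allI)
    fix a b
    show "(\<Sum>k\<in>UNIV. mc H a b k * cu H k) = cu H a * cu H b"
      using hcounit_hmul[of "bvec a" "bvec b"] by (simp add: hmul_bvec hcounit_def sum_bvec)
  qed
  moreover have "cu H \<noteq> (\<lambda>_. 0)" using hcounit_un by (auto simp: hcounit_def)
  ultimately show ?thesis by (simp add: dual_grouplikes_iff)
qed

text \<open>Rather than showing that \<alpha> \<circ> S is again a character, only its left inverse property is
used: left cancellation in the finite monoid of characters already yields the group.\<close>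

lemma dmul_dual_antipode_left:
  assumes "\<alpha> \<in> dual_grouplikes H"
  shows "dmul H (dual_antipode H \<alpha>) \<alpha> = cu H"
proof
  fix k
  have m: "multiplicative H \<alpha>" using assms by (simp add: dual_grouplikes_iff)
  have S: "(\<lambda>j. \<Sum>a\<in>UNIV. \<Sum>b\<in>UNIV. dc H k a b * hmul H (hanti H (bvec a)) (bvec b) j) =
      (\<lambda>j. hcounit H (bvec k) * un H j)"
    using antipode_left[of "bvec k"] by (simp add: hcomul_bvec)
  have "dmul H (dual_antipode H \<alpha>) \<alpha> k =
      (\<Sum>a\<in>UNIV. \<Sum>b\<in>UNIV. dc H k a b * eval \<alpha> (hmul H (hanti H (bvec a)) (bvec b)))"
    by (simp add: dmul_def dual_antipode_def eval_hmul[OF m] eval_bvec mult_ac)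
  also have "\<dots> = eval \<alpha> (\<lambda>j. hcounit H (bvec k) * un H j)"
    by (simp only: eval_double_sum[symmetric] S)
  also have "\<dots> = cu H k"
    by (simp add: eval_scale eval_un[OF assms] hcounit_def sum_bvec)
  finally show "dmul H (dual_antipode H \<alpha>) \<alpha> k = cu H k" .
qed

lemma dmul_left_cancel:
  assumes "\<alpha> \<in> dual_grouplikes H" and "dmul H \<alpha> f = dmul H \<alpha> g"
  shows "f = g"
proof -
  have "dmul H (dual_antipode H \<alpha>) (dmul H \<alpha> f) = dmul H (dual_antipode H \<alpha>) (dmul H \<alpha> g)"
    using assms(2) by simp
  then show ?thesis
    by (simp add: dmul_assoc[symmetric] dmul_dual_antipode_left[OF assms(1)] dmul_cu_left)
qed

lemma dual_grouplikes_independent: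
  "finite S \<Longrightarrow> S \<subseteq> dual_grouplikes H \<Longrightarrow> (\<forall>x. (\<Sum>\<alpha>\<in>S. c \<alpha> * eval \<alpha> x) = 0) \<Longrightarrow> \<forall>\<alpha>\<in>S. c \<alpha> = 0"
proof (induction S arbitrary: c rule: finite_induct)
  case empty
  then show ?case by simp
next
  case (insert \<beta> S)
  have \<beta>: "\<beta> \<in> dual_grouplikes H" and S: "S \<subseteq> dual_grouplikes H" using insert.prems by auto
  have relation: "(\<Sum>\<alpha>\<in>S. c \<alpha> * eval \<alpha> x) = - (c \<beta> * eval \<beta> x)" for x
    using insert.prems(2) insert.hyps by (simp add: add.commute eq_neg_iff_add_eq_0)
  have shifted: "\<forall>\<alpha>\<in>S. c \<alpha> * (eval \<alpha> y - eval \<beta> y) = 0" for y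
  proof -
    have "(\<Sum>\<alpha>\<in>S. (c \<alpha> * (eval \<alpha> y - eval \<beta> y)) * eval \<alpha> x) = 0" for x
    proof -
      have "(\<Sum>\<alpha>\<in>S. (c \<alpha> * (eval \<alpha> y - eval \<beta> y)) * eval \<alpha> x)
          = (\<Sum>\<alpha>\<in>S. c \<alpha> * eval \<alpha> (hmul H x y)) - eval \<beta> y * (\<Sum>\<alpha>\<in>S. c \<alpha> * eval \<alpha> x)"
        using S by (simp add: eval_hmul dual_grouplikes_iff subset_iff sum_distrib_left sum_subtractf
            algebra_simps)
      also have "\<dots> = 0"
        using \<beta> by (simp add: relation eval_hmul dual_grouplikes_iff algebra_simps)
      finally show ?thesis .
    qed
    then show ?thesis using insert.IH[OF S, of "\<lambda>\<alpha>. c \<alpha> * (eval \<alpha> y - eval \<beta> y)"] by simp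
  qed
  have cS: "\<forall>\<alpha>\<in>S. c \<alpha> = 0"
  proof
    fix \<alpha> assume "\<alpha> \<in> S"
    then have "\<alpha> \<noteq> \<beta>" using insert.hyps by auto
    then obtain a where "\<alpha> a \<noteq> \<beta> a" by auto
    with shifted[of "bvec a"] \<open>\<alpha> \<in> S\<close> show "c \<alpha> = 0" by (auto simp: eval_bvec)
  qed
  then have "c \<beta> = 0" using relation[of "un H"] by (simp add: eval_un[OF \<beta>])
  with cS show ?case by simp
qed

lemma finite_dual_grouplikes: "finite (dual_grouplikes H)"
proof -
  interpret V: vector_space "\<lambda>(c::'k) (f::'b \<Rightarrow> 'k). (\<lambda>i. c * f i)"
    by unfold_locales (auto simp: fun_eq_iff algebra_simps)
  have "V.independent (dual_grouplikes H)"
    unfolding V.independent_explicit_finite_subsets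
  proof (intro allI impI ballI)
    fix S u v
    assume S: "S \<subseteq> dual_grouplikes H" "finite S" and sum0: "(\<Sum>v\<in>S. (\<lambda>i. u v * v i)) = 0"
      and "v \<in> S"
    have pointwise: "(\<Sum>v\<in>S. u v * v i) = 0" for i
      using fun_cong[OF sum0, of i] by (simp add: sum_apply)
    have "(\<Sum>\<alpha>\<in>S. u \<alpha> * eval \<alpha> x) = 0" for x
    proof -
      have "(\<Sum>\<alpha>\<in>S. u \<alpha> * eval \<alpha> x) = (\<Sum>i\<in>UNIV. x i * (\<Sum>\<alpha>\<in>S. u \<alpha> * \<alpha> i))"
        by (simp add: Defs.eval_def sum_distrib_left mult_ac sum.swap[of _ S])
      then show ?thesis by (simp add: pointwise)
    qed
    then show "u v = 0" using dual_grouplikes_independent[OF S(2,1)] \<open>v \<in> S\<close> by blast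
  qed
  moreover have "dual_grouplikes H \<subseteq> V.span (range bvec)"
  proof
    fix f :: "'b \<Rightarrow> 'k"
    have "f = (\<Sum>i\<in>UNIV. (\<lambda>j. f i * bvec i j))"
      unfolding bvec_def by (rule ext) (simp add: sum_apply if_distrib[of "\<lambda>t. _ * t"] cong: if_cong)
    also have "\<dots> \<in> V.span (range bvec)"
      by (intro V.span_sum V.span_scale V.span_base) auto
    finally show "f \<in> V.span (range bvec)" .
  qed
  ultimately show ?thesis using V.independent_span_bound[of "range bvec"] by simp
qed

lemma dual_group_is_group: "group (dual_group H)"
proof -
  interpret monoid "dual_group H"
    by (rule monoidI) (auto simp: dmul_closed cu_grouplike dmul_assoc dmul_cu_left dmul_cu_right)
  show ?thesis
    by (rule group_if_finite_left_cancel) (auto simp: finite_dual_grouplikes dest: dmul_left_cancel)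
qed

lemma funpow_dmul:
  assumes "\<alpha> \<in> dual_grouplikes H"
  shows "(dmul H \<alpha> ^^ n) (cu H) = \<alpha> [^]\<^bsub>dual_group H\<^esub> n"
proof (induction n)
  case (Suc n)
  interpret group "dual_group H" by (rule dual_group_is_group)
  show ?case using Suc nat_pow_Suc2[of \<alpha> n] assms by simp
qed simp

lemma dual_group_ord_pos:
  assumes "\<alpha> \<in> dual_grouplikes H"
  shows "0 < group.ord (dual_group H) \<alpha>"
proof -
  interpret group "dual_group H" by (rule dual_group_is_group)
  show ?thesis using ord_ge_1[of \<alpha>] assms finite_dual_grouplikes by simp
qed

lemma elem_ord_dmul:
  assumes "\<alpha> \<in> dual_grouplikes H"
  shows "elem_ord (dmul H) (cu H) \<alpha> = group.ord (dual_group H) \<alpha>"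
proof -
  interpret group "dual_group H" by (rule dual_group_is_group)
  show ?thesis
    using assms pow_eq_id[of \<alpha>]
    by (intro elem_ord_eqI dual_group_ord_pos) (simp_all add: funpow_dmul)
qed

lemma eval_funpow_hmul:
  assumes "\<alpha> \<in> dual_grouplikes H"
  shows "eval \<alpha> ((hmul H x ^^ n) (un H)) = eval \<alpha> x ^ n"
  using assms by (induction n) (simp_all add: eval_un eval_hmul dual_grouplikes_iff)

end

section \<open>Slices of a universal R-matrix\<close>

locale quasitriangular = hopf_algebra +
  fixes R R' :: "'b::finite \<times> 'b \<Rightarrow> 'k::field"
  assumes R_R': "tmul H R R' = tone H"
    and R'_R: "tmul H R' R = tone H"
    and R_conj: "flip (hcomul H h) = tmul H (tmul H R (hcomul H h)) R'"
    and delta_id_R: "delta_id H R = t3mul H (leg13 H R) (leg23 H R)"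
    and id_delta_R: "id_delta H R = t3mul H (leg13 H R) (leg12 H R)"

lemma quasitriangularI:
  assumes "is_hopf H" and "is_universal_R H R"
  obtains R' where "quasitriangular H R R'"
  using assms unfolding is_universal_R_def quasitriangular_def quasitriangular_axioms_def hopf_algebra_def
  by blast

context quasitriangular
begin

context
  fixes \<beta> assumes \<beta>: "\<beta> \<in> dual_grouplikes H"
begin

lemma multiplicative_\<beta>: "multiplicative H \<beta>"
  using \<beta> by (simp add: dual_grouplikes_iff)

lemma contract_fst_R_inverse:
  "hmul H (contract_fst \<beta> R) (contract_fst \<beta> R') = un H"
  "hmul H (contract_fst \<beta> R') (contract_fst \<beta> R) = un H"
  by (simp_all add: R_R' R'_R contract_fst_tmul[OF multiplicative_\<beta>, symmetric] contract_fst_tone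
      eval_un[OF \<beta>])

lemma contract_snd_R_inverse:
  "hmul H (contract_snd \<beta> R) (contract_snd \<beta> R') = un H"
  "hmul H (contract_snd \<beta> R') (contract_snd \<beta> R) = un H"
  by (simp_all add: R_R' R'_R contract_snd_tmul[OF multiplicative_\<beta>, symmetric] contract_snd_tone
      eval_un[OF \<beta>])

lemma contract_snd_hcomul_intertwines:
  "hmul H (contract_snd \<beta> (hcomul H h)) (contract_fst \<beta> R) =
    hmul H (contract_fst \<beta> R) (contract_fst \<beta> (hcomul H h))"
proof -
  have "contract_snd \<beta> (hcomul H h) =
      hmul H (hmul H (contract_fst \<beta> R) (contract_fst \<beta> (hcomul H h))) (contract_fst \<beta> R')"
    using arg_cong[OF R_conj[of h], of "contract_fst \<beta>"]
    by (simp add: contract_fst_flip contract_fst_tmul[OF multiplicative_\<beta>])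
  then show ?thesis by (simp add: hmul_assoc contract_fst_R_inverse hmul_un_right)
qed

lemma contract_fst_hcomul_intertwines:
  "hmul H (contract_fst \<beta> (hcomul H h)) (contract_snd \<beta> R) =
    hmul H (contract_snd \<beta> R) (contract_snd \<beta> (hcomul H h))"
proof -
  have "contract_fst \<beta> (hcomul H h) =
      hmul H (hmul H (contract_snd \<beta> R) (contract_snd \<beta> (hcomul H h))) (contract_snd \<beta> R')"
    using arg_cong[OF R_conj[of h], of "contract_snd \<beta>"]
    by (simp add: contract_snd_flip contract_snd_tmul[OF multiplicative_\<beta>])
  then show ?thesis by (simp add: hmul_assoc contract_snd_R_inverse hmul_un_right)
qed

lemma hcomul_contract_fst_R: "hcomul H (contract_fst \<beta> R) = (\<lambda>(a, b). contract_fst \<beta> R a * contract_fst \<beta> R b)"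
  by (simp add: contract3_fst_id_delta[symmetric] id_delta_R contract3_fst_t3mul[OF multiplicative_\<beta>]
      contract3_fst_leg13 contract3_fst_leg12 tmul_pure_tensors hmul_un_left hmul_un_right)

lemma hcomul_contract_snd_R: "hcomul H (contract_snd \<beta> R) = (\<lambda>(a, b). contract_snd \<beta> R a * contract_snd \<beta> R b)"
  by (simp add: contract3_thd_delta_id[symmetric] delta_id_R contract3_thd_t3mul[OF multiplicative_\<beta>]
      contract3_thd_leg13 contract3_thd_leg23 tmul_pure_tensors hmul_un_left hmul_un_right)

lemma contract_fst_R_grouplike: "contract_fst \<beta> R \<in> grouplikes H"
  using nonzero_if_right_invertible[OF contract_fst_R_inverse(1)]
  by (simp add: grouplikes_def hcomul_contract_fst_R)

lemma contract_fst_R_dmul: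
  assumes "\<gamma> \<in> dual_grouplikes H"
  shows "contract_fst (dmul H \<beta> \<gamma>) R = hmul H (contract_fst \<beta> R) (contract_fst \<gamma> R)"
proof -
  have "multiplicative H \<gamma>" using assms by (simp add: dual_grouplikes_iff)
  then show ?thesis
    by (simp add: contract3_fst_snd_delta_id[symmetric] delta_id_R contract3_fst_snd_t3mul
        multiplicative_\<beta> contract3_fst_snd_leg13 contract3_fst_snd_leg23 eval_un[OF \<beta>] eval_un[OF assms])
qed

text \<open>If x_\<beta> = 1, the conjugation axiom makes the two one-sided slices of \<Delta>(h) agree,
which says that \<beta> commutes with every functional.\<close>

lemma dual_center_if_contract_fst_R_eq_un:
  assumes "contract_fst \<beta> R = un H"
  shows "\<beta> \<in> dual_center H"
proof -
  have "contract_fst \<beta> R' = un H"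
    using contract_fst_R_inverse(1) assms by (simp add: hmul_un_left)
  then have slices: "contract_snd \<beta> (hcomul H h) = contract_fst \<beta> (hcomul H h)" for h
    using contract_snd_hcomul_intertwines[of h] assms by (simp add: hmul_un_left hmul_un_right)
  have "dmul H \<beta> g = dmul H g \<beta>" for g
  proof
    fix k
    have "dmul H g \<beta> k = eval g (contract_snd \<beta> (hcomul H (bvec k)))"
      by (simp add: dmul_def Defs.eval_def contract_snd_def hcomul_bvec sum_distrib_left mult_ac)
    then show "dmul H \<beta> g k = dmul H g \<beta> k" by (simp add: slices dmul_eq_eval)
  qed
  then show ?thesis by (simp add: dual_center_def)
qed

lemma contract_snd_fst_R_central:
  assumes "\<gamma> \<in> dual_grouplikes H" and "dmul H \<gamma> \<beta> = cu H"
  shows "hmul H (contract_snd \<beta> R) (contract_fst \<beta> R) \<in> center H"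
  unfolding center_def
proof (intro CollectI allI)
  fix w
  define h where "h = contract_fst \<gamma> (hcomul H w)"
  have w: "contract_fst \<beta> (hcomul H h) = w"
    unfolding h_def by (simp add: contract_fst_hcomul_contract_fst hcomul_coassoc assms(2) contract_fst_cu_hcomul)
  let ?x = "contract_fst \<beta> R" and ?y = "contract_snd \<beta> R"
    and ?l = "contract_fst \<beta> (hcomul H h)" and ?r = "contract_snd \<beta> (hcomul H h)"
  have "hmul H (hmul H ?y ?x) ?l = hmul H ?y (hmul H ?r ?x)"
    by (simp add: hmul_assoc contract_snd_hcomul_intertwines)
  also have "\<dots> = hmul H (hmul H ?l ?y) ?x"
    by (simp add: hmul_assoc[symmetric] contract_fst_hcomul_intertwines)
  also have "\<dots> = hmul H ?l (hmul H ?y ?x)"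
    by (simp add: hmul_assoc)
  finally show "hmul H (hmul H ?y ?x) w = hmul H w (hmul H ?y ?x)" by (simp add: w)
qed

lemma contract_snd_fst_R_grouplike: "hmul H (contract_snd \<beta> R) (contract_fst \<beta> R) \<in> grouplikes H"
proof -
  let ?x = "contract_fst \<beta> R" and ?y = "contract_snd \<beta> R"
  have "hmul H (hmul H ?y ?x) (hmul H (contract_fst \<beta> R') (contract_snd \<beta> R')) = un H"
    by (simp add: hmul_assoc contract_fst_R_inverse contract_snd_R_inverse hmul_un_left
        flip: hmul_assoc[of ?x "contract_fst \<beta> R'"])
  then have "hmul H ?y ?x \<noteq> (\<lambda>_. 0)" by (rule nonzero_if_right_invertible)
  then show ?thesis
    by (simp add: grouplikes_def hcomul_hmul hcomul_contract_fst_R hcomul_contract_snd_R tmul_pure_tensors)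
qed

lemma contract_snd_fst_R_eq_un:
  assumes "grouplikes H \<inter> center H = {un H}"
  shows "hmul H (contract_snd \<beta> R) (contract_fst \<beta> R) = un H"
proof -
  interpret group "dual_group H" by (rule dual_group_is_group)
  have "inv\<^bsub>dual_group H\<^esub> \<beta> \<in> dual_grouplikes H" and "dmul H (inv\<^bsub>dual_group H\<^esub> \<beta>) \<beta> = cu H"
    using \<beta> l_inv[of \<beta>] inv_closed[of \<beta>] by auto
  then show ?thesis
    using contract_snd_fst_R_central contract_snd_fst_R_grouplike assms by blast
qed

lemma eval_contract_fst_R_square:
  assumes "grouplikes H \<inter> center H = {un H}"
  shows "eval \<beta> (contract_fst \<beta> R) * eval \<beta> (contract_fst \<beta> R) = 1"
proof -
  have "eval \<beta> (contract_fst \<beta> R) * eval \<beta> (contract_fst \<beta> R) =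
      eval \<beta> (hmul H (contract_snd \<beta> R) (contract_fst \<beta> R))"
    by (simp add: eval_hmul[OF multiplicative_\<beta>] eval_contract_snd_self)
  then show ?thesis by (simp add: contract_snd_fst_R_eq_un[OF assms] eval_un[OF \<beta>])
qed

end

lemma contract_fst_cu_R: "contract_fst (cu H) R = un H"
proof -
  let ?e = "contract_fst (cu H) R" and ?e' = "contract_fst (cu H) R'"
  have idem: "hmul H ?e ?e = ?e"
    using contract_fst_R_dmul[OF cu_grouplike cu_grouplike] by (simp add: dmul_cu_left)
  have "?e = hmul H ?e (hmul H ?e ?e')"
    by (simp add: contract_fst_R_inverse[OF cu_grouplike] hmul_un_right)
  also have "\<dots> = un H"
    by (subst hmul_assoc[symmetric]) (simp add: idem contract_fst_R_inverse[OF cu_grouplike])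
  finally show ?thesis .
qed

lemma contract_fst_R_eq_un_iff:
  assumes "dual_grouplikes H \<inter> dual_center H = {cu H}" and "\<beta> \<in> dual_grouplikes H"
  shows "contract_fst \<beta> R = un H \<longleftrightarrow> \<beta> = cu H"
  using dual_center_if_contract_fst_R_eq_un[OF assms(2)] assms contract_fst_cu_R by blast

lemma funpow_hmul_contract_fst_R:
  assumes "\<alpha> \<in> dual_grouplikes H"
  shows "(hmul H (contract_fst \<alpha> R) ^^ n) (un H) = contract_fst (\<alpha> [^]\<^bsub>dual_group H\<^esub> n) R"
proof (induction n)
  case 0
  then show ?case by (simp add: contract_fst_cu_R)
next
  case (Suc n)
  interpret group "dual_group H" by (rule dual_group_is_group)
  have "\<alpha> [^]\<^bsub>dual_group H\<^esub> n \<in> dual_grouplikes H" using assms nat_pow_closed[of \<alpha> n] by simp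
  then show ?case
    using Suc assms nat_pow_Suc2[of \<alpha> n] by (simp add: contract_fst_R_dmul)
qed

lemma elem_ord_contract_fst_R:
  assumes "dual_grouplikes H \<inter> dual_center H = {cu H}" and "\<alpha> \<in> dual_grouplikes H"
  shows "elem_ord (hmul H) (un H) (contract_fst \<alpha> R) = group.ord (dual_group H) \<alpha>"
proof -
  interpret group "dual_group H" by (rule dual_group_is_group)
  show ?thesis
  proof (rule elem_ord_eqI)
    show "0 < ord \<alpha>" by (rule dual_group_ord_pos[OF assms(2)])
    show "(hmul H (contract_fst \<alpha> R) ^^ n) (un H) = un H \<longleftrightarrow> ord \<alpha> dvd n" for n
      using assms pow_eq_id[of \<alpha> n] nat_pow_closed[of \<alpha> n]
        contract_fst_R_eq_un_iff[of "\<alpha> [^]\<^bsub>dual_group H\<^esub> n"]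
      by (simp add: funpow_hmul_contract_fst_R)
  qed
qed

lemma eval_contract_fst_R_pow_ord:
  assumes "\<alpha> \<in> dual_grouplikes H"
  shows "eval \<alpha> (contract_fst \<alpha> R) ^ group.ord (dual_group H) \<alpha> = 1"
proof -
  interpret group "dual_group H" by (rule dual_group_is_group)
  have "eval \<alpha> (contract_fst \<alpha> R) ^ ord \<alpha> = eval \<alpha> (contract_fst (\<alpha> [^]\<^bsub>dual_group H\<^esub> ord \<alpha>) R)"
    using assms by (simp add: eval_funpow_hmul funpow_hmul_contract_fst_R flip: eval_funpow_hmul)
  then show ?thesis using assms by (simp add: contract_fst_cu_R eval_un)
qed

end

theorem mainTheorem14:
  fixes H :: "('b::finite, 'k::field) hopf_sc"
  assumes "is_hopf H"
    and "card (dual_grouplikes H) \<noteq> 1"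
    and "dual_grouplikes H \<inter> dual_center H = {cu H}"
    and "grouplikes H \<inter> center H = {un H}"
    and "\<exists>p::nat. prime p \<and> odd p \<and> p dvd card (dual_grouplikes H) \<and>
           (\<forall>g \<in> grouplikes H. \<forall>\<alpha> \<in> dual_grouplikes H.
              elem_ord (hmul H) (un H) g = p \<longrightarrow> elem_ord (dmul H) (cu H) \<alpha> = p \<longrightarrow>
              eval \<alpha> g \<noteq> 1)"
  shows "\<not> (\<exists>R. is_universal_R H R)"
proof
  assume "\<exists>R. is_universal_R H R"
  then obtain R R' where "quasitriangular H R R'"
    using quasitriangularI[OF assms(1)] by metis
  then interpret quasitriangular H R R' .
  interpret G: group "dual_group H" by (rule dual_group_is_group)
  obtain p :: nat where p: "prime p" "odd p" "p dvd card (dual_grouplikes H)"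
    and no_trivial_pairing: "\<forall>g \<in> grouplikes H. \<forall>\<alpha> \<in> dual_grouplikes H.
      elem_ord (hmul H) (un H) g = p \<longrightarrow> elem_ord (dmul H) (cu H) \<alpha> = p \<longrightarrow> eval \<alpha> g \<noteq> 1"
    using assms(5) by blast
  obtain \<alpha> where \<alpha>: "\<alpha> \<in> dual_grouplikes H" and ord: "G.ord \<alpha> = p"
    using G.exists_elem_of_prime_ord[OF _ p(1)] p(3) finite_dual_grouplikes by (auto simp: order_def)
  define \<omega> where "\<omega> = eval \<alpha> (contract_fst \<alpha> R)"
  have "\<omega> = \<omega> ^ p"
    using eval_contract_fst_R_square[OF \<alpha> assms(4)] p(2) unfolding \<omega>_def
    by (simp add: power_odd_eq_self_if_square_one)
  also have "\<dots> = 1"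
    using eval_contract_fst_R_pow_ord[OF \<alpha>] ord by (simp add: \<omega>_def)
  finally have "\<omega> = 1" .
  moreover have "\<omega> \<noteq> 1"
    using no_trivial_pairing contract_fst_R_grouplike[OF \<alpha>] \<alpha> elem_ord_contract_fst_R[OF assms(3) \<alpha>]
      elem_ord_dmul[OF \<alpha>] ord
    by (simp add: \<omega>_def)
  ultimately show False by simp
qed

end
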